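(* Let $\mathbb X$ be a compact metric space and $L\ge0$. Then $$\mathcal P^{\mathrm{curve}}_L(\mathbb X)=\{\gamma_*\omega:\ \gamma\in\mathrm{Lip}(\mathbb X)\text{ has constant speed and }L(\gamma)\le L,\ \omega\in\mathcal P([0,1])\}.$$
   Context: $\mathcal P(Y)$: Borel probability measures on $Y$; $\gamma_*\omega(B)=\omega(\gamma^{-1}(B))$. A closed curve is a continuous $\gamma\colon[a,b]\to\mathbb X$ with $\gamma(a)=\gamma(b)$; its length is $\ell(\gamma)=\sup\{\sum_{k=1}^n\mathrm{dist}_{\mathbb X}(\gamma(t_k),\gamma(t_{k-1})):a\le t_0\le\dots\le t_n\le b\}$. $\mathcal P^{\mathrm{curve}}_L(\mathbb X)$ is the set of $\nu\in\mathcal P(\mathbb X)$ such that $\mathrm{supp}(\nu)\subset\gamma([a,b])$ for some closed curve $\gamma\colon[a,b]\to\mathbb X$ with $\ell(\gamma)\le L$. $\mathrm{Lip}(\mathbb X)$: Lipschitz $\gamma\colon[0,1]\to\mathbb X$ with $\gamma(0)=\gamma(1)$; $L(\gamma)$ is the optimal Lipschitz constant. The speed is the metric derivative $|\dot\gamma|(t)=\lim_{s\to t}\mathrm{dist}_{\mathbb X}(\gamma(s),\gamma(t))/|s-t|$ (defined a.e.); constant speed means it is a.e. constant. *)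

theory Defs
  imports "HOL-Analysis.Analysis" "HOL-Probability.Probability"
begin

definition prob_measures :: "'a::metric_space set \<Rightarrow> 'a measure set" where
  "prob_measures Y = {\<nu>. prob_space \<nu> \<and> sets \<nu> = sets (restrict_space borel Y) \<and> space \<nu> = Y}"

definition msupp :: "'a::metric_space measure \<Rightarrow> 'a set" where
  "msupp \<nu> = {x \<in> space \<nu>. \<forall>U. open U \<and> x \<in> U \<longrightarrow> emeasure \<nu> (U \<inter> space \<nu>) > 0}"

definition curve_length :: "(real \<Rightarrow> 'a::metric_space) \<Rightarrow> real \<Rightarrow> real \<Rightarrow> ereal" where
  "curve_length \<gamma> a b = (SUP p \<in> {(n, t). a \<le> t 0 \<and> (\<forall>k<n. t k \<le> t (Suc k)) \<and> t n \<le> b}.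
      ereal (\<Sum>k=1..fst p. dist (\<gamma> (snd p k)) (\<gamma> (snd p (k - 1)))))"

definition closed_curve_in :: "'a::metric_space set \<Rightarrow> (real \<Rightarrow> 'a) \<Rightarrow> real \<Rightarrow> real \<Rightarrow> bool" where
  "closed_curve_in X \<gamma> a b \<longleftrightarrow> a \<le> b \<and> continuous_on {a..b} \<gamma> \<and> \<gamma> ` {a..b} \<subseteq> X \<and> \<gamma> a = \<gamma> b"

definition P_curve :: "'a::metric_space set \<Rightarrow> real \<Rightarrow> 'a measure set" where
  "P_curve X L = {\<nu> \<in> prob_measures X. \<exists>\<gamma> a b. closed_curve_in X \<gamma> a b \<and>
       curve_length \<gamma> a b \<le> ereal L \<and> msupp \<nu> \<subseteq> \<gamma> ` {a..b}}"

definition Lip_loops :: "'a::metric_space set \<Rightarrow> (real \<Rightarrow> 'a) set" where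
  "Lip_loops X = {\<gamma>. (\<exists>C. lipschitz_on C {0..1} \<gamma>) \<and> \<gamma> ` {0..1} \<subseteq> X \<and> \<gamma> 0 = \<gamma> 1}"

definition lip_const :: "(real \<Rightarrow> 'a::metric_space) \<Rightarrow> real" where
  "lip_const \<gamma> = Inf {C. lipschitz_on C {0..1} \<gamma>}"

definition constant_speed :: "(real \<Rightarrow> 'a::metric_space) \<Rightarrow> bool" where
  "constant_speed \<gamma> \<longleftrightarrow> (\<exists>c. AE t in lebesgue_on {0..1}.
      ((\<lambda>s. dist (\<gamma> s) (\<gamma> t) / \<bar>s - t\<bar>) \<longlongrightarrow> c) (at t within {0..1}))"

end

theory Submission
  imports Defs
begin

text \<open>A closed curve \<open>g\<close> of length \<open>\<ell> \<le> L\<close> is reparametrised proportionally to arc length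
  over \<open>[0, 1]\<close>. The new curve \<open>\<sigma>\<close> has the same image and endpoints, is \<open>\<ell>\<close>-Lipschitz and still
  has length \<open>\<ell>\<close>. A curve whose length equals its Lipschitz constant \<open>\<ell>\<close> has metric derivative
  \<open>\<ell>\<close> almost everywhere: on each interval of an almost optimal inscribed polygon, the points
  where \<open>\<sigma>\<close> is slower than \<open>\<ell> - \<epsilon>\<close> at small scales are covered, by the Vitali lemma, by a
  set of measure \<open>5/\<epsilon>\<close> times the length defect of that polygon side. A measure supported on
  \<open>\<sigma>([0, 1])\<close> is the push-forward under \<open>\<sigma>\<close> of its image under the Borel section
  \<open>x \<mapsto> min \<sigma>\<^sup>-\<^sup>1(x)\<close>. Conversely, the push-forward of a measure on \<open>[0, 1]\<close> under a
  Lipschitz loop is supported on the loop, whose length is at most the Lipschitz constant.\<close>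

section \<open>Inscribed polygons\<close>

fun polygon_length :: "(real \<Rightarrow> 'a::metric_space) \<Rightarrow> real list \<Rightarrow> real" where
  "polygon_length g (x # y # xs) = dist (g x) (g y) + polygon_length g (y # xs)"
| "polygon_length g _ = 0"

definition partitions :: "real \<Rightarrow> real \<Rightarrow> real list set" where
  "partitions a b = {xs. xs \<noteq> [] \<and> sorted xs \<and> set xs \<subseteq> {a..b}}"

lemma polygon_length_nonneg: "0 \<le> polygon_length g xs"
  by (induction g xs rule: polygon_length.induct) auto

lemma polygon_length_conv_sum:
  "polygon_length g xs = (\<Sum>k<length xs - 1. dist (g (xs ! k)) (g (xs ! Suc k)))"
proof (induction g xs rule: polygon_length.induct)
  case (1 g x y xs)
  have "length (x # y # xs) - 1 = Suc (length (y # xs) - 1)" by simp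
  then show ?case
    by (simp only: sum.lessThan_Suc_shift polygon_length.simps 1) simp
qed auto

lemma polygon_length_defect_telescope:
  assumes "length us = Suc n"
  shows "(\<Sum>i<n. c * (us ! Suc i - us ! i) - dist (g (us ! i)) (g (us ! Suc i)))
    = c * (last us - hd us) - polygon_length g us"
proof -
  have "us \<noteq> []"
    using assms by auto
  then have "us ! n = last us" "us ! 0 = hd us"
    using assms by (simp_all add: last_conv_nth hd_conv_nth)
  have "(\<Sum>i<n. c * (us ! Suc i - us ! i) - dist (g (us ! i)) (g (us ! Suc i)))
      = c * (\<Sum>i<n. us ! Suc i - us ! i) - (\<Sum>i<n. dist (g (us ! i)) (g (us ! Suc i)))"
    by (simp only: sum_subtractf[of "\<lambda>i. c * (us ! Suc i - us ! i)"] sum_distrib_left)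
  also have "\<dots> = c * (us ! n - us ! 0) - polygon_length g us"
    using assms by (simp only: sum_lessThan_telescope polygon_length_conv_sum) simp
  finally show ?thesis
    using \<open>us ! n = last us\<close> \<open>us ! 0 = hd us\<close> by simp
qed

lemma polygon_length_map_upt:
  "polygon_length g (map t [0..<Suc n]) = (\<Sum>k=1..n. dist (g (t k)) (g (t (k - 1))))"
proof -
  have "polygon_length g (map t [0..<Suc n]) = (\<Sum>k<n. dist (g (t k)) (g (t (Suc k))))"
    unfolding polygon_length_conv_sum by (intro sum.cong) (simp_all del: upt_Suc)
  also have "\<dots> = (\<Sum>k=1..n. dist (g (t k)) (g (t (k - 1))))"
    by (simp only: One_nat_def sum.atLeast1_atMost_eq) (simp add: dist_commute)
  finally show ?thesis .
qed

lemma map_upt_in_partitions: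
  assumes "a \<le> t 0" "\<forall>k<n. t k \<le> t (Suc k)" "t n \<le> b"
  shows "map t [0..<Suc n] \<in> partitions a b"
proof -
  let ?xs = "map t [0..<Suc n]"
  have sorted: "sorted ?xs"
    unfolding sorted_iff_nth_Suc using assms(2) by (simp del: upt_Suc)
  have "t 0 \<le> t k \<and> t k \<le> t n" if "k \<le> n" for k
    using sorted_nth_mono[OF sorted, of 0 k] sorted_nth_mono[OF sorted, of k n] that
    by (simp del: upt_Suc)
  then have "set ?xs \<subseteq> {a..b}"
    using assms(1,3) by (fastforce simp: less_Suc_eq_le simp del: upt_Suc)
  with sorted show ?thesis
    unfolding partitions_def by simp
qed

lemma curve_length_conv_partitions:
  "curve_length g a b = (SUP xs\<in>partitions a b. ereal (polygon_length g xs))"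
proof -
  let ?P = "{(n, t). a \<le> t 0 \<and> (\<forall>k<n. t k \<le> t (Suc k)) \<and> t n \<le> b}"
  let ?F = "\<lambda>p. ereal (\<Sum>k=1..fst p. dist (g (snd p k)) (g (snd p (k - 1))))"
  have "?F ` ?P = (\<lambda>xs. ereal (polygon_length g xs)) ` partitions a b"
  proof (intro equalityI image_subsetI)
    fix p assume "p \<in> ?P"
    then show "?F p \<in> (\<lambda>xs. ereal (polygon_length g xs)) ` partitions a b"
      by (intro image_eqI[where x = "map (snd p) [0..<Suc (fst p)]"])
         (auto simp: polygon_length_map_upt map_upt_in_partitions simp del: upt_Suc)
  next
    fix xs assume xs: "xs \<in> partitions a b"
    define n where "n = length xs - 1"
    have len: "length xs = Suc n" and "sorted xs" and sub: "set xs \<subseteq> {a..b}"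
      using xs by (auto simp: partitions_def n_def)
    moreover have "xs ! 0 \<in> {a..b}" "xs ! n \<in> {a..b}"
      using sub len by (metis lessI nth_mem subsetD zero_less_Suc)+
    ultimately have "(n, (!) xs) \<in> ?P"
      by (auto simp: sorted_iff_nth_Suc)
    moreover have "map ((!) xs) [0..<Suc n] = xs"
      using len map_nth[of xs] by simp
    then have "polygon_length g xs = (\<Sum>k=1..n. dist (g (xs ! k)) (g (xs ! (k - 1))))"
      by (metis polygon_length_map_upt)
    ultimately show "ereal (polygon_length g xs) \<in> ?F ` ?P"
      by (intro image_eqI[where x = "(n, (!) xs)"]) auto
  qed
  then show ?thesis
    unfolding curve_length_def by (simp add: image_image)
qed

lemma polygon_length_append:
  assumes "xs \<noteq> []" "ys \<noteq> []"
  shows "polygon_length g (xs @ ys) =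
    polygon_length g xs + dist (g (last xs)) (g (hd ys)) + polygon_length g ys"
  using assms(1)
proof (induction xs rule: induct_list012)
  case (2 x)
  then show ?case using assms(2) by (cases ys) auto
qed simp_all

lemma polygon_length_Cons_ge: "polygon_length g ys \<le> polygon_length g (x # ys)"
  by (cases ys) auto

lemma polygon_length_snoc_ge: "polygon_length g ys \<le> polygon_length g (ys @ [x])"
  by (cases "ys = []") (simp_all add: polygon_length_append)

lemma polygon_length_insert_le:
  "polygon_length g (xs @ ys) \<le> polygon_length g (xs @ [m]) + polygon_length g (m # ys)"
proof (cases "xs = [] \<or> ys = []")
  case True
  then show ?thesis
    using polygon_length_Cons_ge[of g ys m] polygon_length_snoc_ge[of g xs m]
      polygon_length_nonneg[of g "xs @ [m]"] polygon_length_nonneg[of g "m # ys"]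
    by auto
next
  case False
  then have "polygon_length g (xs @ ys) \<le>
      polygon_length g xs + dist (g (last xs)) (g m) + (dist (g m) (g (hd ys)) + polygon_length g ys)"
    using dist_triangle[of "g (last xs)" "g (hd ys)" "g m"] by (simp add: polygon_length_append)
  also have "\<dots> = polygon_length g (xs @ [m]) + polygon_length g (m # ys)"
    using False by (cases ys) (simp_all add: polygon_length_append)
  finally show ?thesis .
qed

lemma polygon_length_const: "set ys \<subseteq> {p} \<Longrightarrow> polygon_length g ys = 0"
  by (induction ys rule: induct_list012) auto

lemma polygon_length_const_snoc:
  "set ys \<subseteq> {p} \<Longrightarrow> polygon_length g (ys @ [c]) \<le> dist (g p) (g c)"
proof (cases "ys = []")
  case False
  moreover assume "set ys \<subseteq> {p}"
  moreover from calculation have "last ys = p"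
    using last_in_set by blast
  ultimately show ?thesis
    by (simp add: polygon_length_append polygon_length_const)
qed simp

lemma polygon_length_map:
  "(\<And>x. x \<in> set ys \<Longrightarrow> \<sigma> (f x) = g x) \<Longrightarrow> polygon_length \<sigma> (map f ys) = polygon_length g ys"
  by (induction ys rule: induct_list012) auto

lemma polygon_length_rev: "polygon_length g (rev xs) = polygon_length g xs"
proof (induction xs)
  case (Cons x xs)
  show ?case
  proof (cases "xs = []")
    case False
    then have "polygon_length g (rev xs @ [x]) = polygon_length g (rev xs) + dist (g (hd xs)) (g x)"
      using polygon_length_append[of "rev xs" "[x]" g] by (simp add: last_rev)
    with False show ?thesis
      using Cons.IH by (cases xs) (simp_all add: dist_commute)
  qed simp
qed simp

lemma polygon_length_le_lipschitz:
  assumes "C-lipschitz_on {a..b} g" and "xs \<in> partitions a b"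
  shows "polygon_length g xs \<le> C * (b - a)"
proof -
  have "polygon_length g xs \<le> C * (last xs - hd xs)"
    if "sorted xs" "set xs \<subseteq> {a..b}" "xs \<noteq> []" for xs
    using that
  proof (induction xs rule: induct_list012)
    case (3 x y zs)
    have "dist (g x) (g y) \<le> C * dist x y"
      using 3 by (intro lipschitz_onD[OF assms(1)]) auto
    then show ?case
      using 3 by (simp add: dist_real_def algebra_simps)
  qed simp_all
  moreover have "last xs \<in> {a..b}" "hd xs \<in> {a..b}"
    using assms(2) hd_in_set[of xs] last_in_set[of xs] unfolding partitions_def by blast+
  then have "C * (last xs - hd xs) \<le> C * (b - a)"
    using lipschitz_on_nonneg[OF assms(1)] by (intro mult_left_mono) auto
  ultimately show ?thesis
    using assms(2) unfolding partitions_def by fastforce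
qed

lemma partitions_mono: "a \<le> a' \<Longrightarrow> b' \<le> b \<Longrightarrow> partitions a' b' \<subseteq> partitions a b"
  unfolding partitions_def by auto

lemma two_point_partition: "a \<le> b \<Longrightarrow> [a, b] \<in> partitions a b"
  unfolding partitions_def by auto

lemma partitions_imp_le:
  assumes "xs \<in> partitions a b"
  shows "a \<le> b"
proof -
  have "hd xs \<in> {a..b}"
    using assms hd_in_set unfolding partitions_def by blast
  then show ?thesis by simp
qed

lemma partitions_nth_bounds:
  assumes "xs \<in> partitions a b" "Suc i < length xs"
  shows "a \<le> xs ! i" "xs ! i \<le> xs ! Suc i" "xs ! Suc i \<le> b"
proof -
  have "xs ! i \<in> set xs" "xs ! Suc i \<in> set xs"
    using assms(2) by simp_all
  then show "a \<le> xs ! i" "xs ! Suc i \<le> b"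
    using assms(1) unfolding partitions_def by auto
  show "xs ! i \<le> xs ! Suc i"
    using assms unfolding partitions_def by (simp add: sorted_iff_nth_Suc)
qed

lemma partitions_pad:
  assumes "xs \<in> partitions a b"
  shows "a # xs @ [b] \<in> partitions a b"
proof -
  have "set xs \<subseteq> {a..b}" "sorted xs"
    using assms unfolding partitions_def by auto
  then show ?thesis
    using partitions_imp_le[OF assms] unfolding partitions_def by (auto simp: sorted_append)
qed

lemma partitions_append:
  assumes "xs \<in> partitions a m" "ys \<in> partitions m c"
  shows "xs @ ys \<in> partitions a c"
proof -
  have xs: "sorted xs" "set xs \<subseteq> {a..m}" "xs \<noteq> []" and ys: "sorted ys" "set ys \<subseteq> {m..c}"
    using assms unfolding partitions_def by auto
  have "a \<le> m" "m \<le> c"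
    using partitions_imp_le assms by blast+
  then have "set xs \<subseteq> {a..c}" "set ys \<subseteq> {a..c}"
    using xs ys by auto
  moreover have "x \<le> y" if "x \<in> set xs" "y \<in> set ys" for x y
  proof -
    have "x \<le> m" "m \<le> y" using xs ys that by auto
    then show ?thesis by linarith
  qed
  ultimately show ?thesis
    using xs ys unfolding partitions_def by (simp add: sorted_append)
qed

lemma sorted_dropWhile_le_gt:
  "sorted xs \<Longrightarrow> x \<in> set (dropWhile (\<lambda>x. x \<le> (m::real)) xs) \<Longrightarrow> m < x"
  by (induction xs) (auto split: if_splits)

lemma takeWhile_snoc_in_partitions:
  assumes "xs \<in> partitions a c" "a \<le> m"
  shows "takeWhile (\<lambda>x. x \<le> m) xs @ [m] \<in> partitions a m"
proof -
  have "sorted xs" "set xs \<subseteq> {a..c}"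
    using assms unfolding partitions_def by auto
  then have "sorted (takeWhile (\<lambda>x. x \<le> m) xs)" "set (takeWhile (\<lambda>x. x \<le> m) xs) \<subseteq> {a..m}"
    using sorted_takeWhile set_takeWhileD[of _ "\<lambda>x. x \<le> m" xs] by fastforce+
  then show ?thesis
    using assms(2) unfolding partitions_def by (auto simp: sorted_append)
qed

lemma dropWhile_Cons_in_partitions:
  assumes "xs \<in> partitions a c" "m \<le> c"
  shows "m # dropWhile (\<lambda>x. x \<le> m) xs \<in> partitions m c"
proof -
  have "sorted xs" "set xs \<subseteq> {a..c}"
    using assms unfolding partitions_def by auto
  then have "sorted (dropWhile (\<lambda>x. x \<le> m) xs)" "\<forall>x\<in>set (dropWhile (\<lambda>x. x \<le> m) xs). m < x \<and> x \<le> c"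
    using sorted_dropWhile set_dropWhileD[of _ "\<lambda>x. x \<le> m" xs] sorted_dropWhile_le_gt by fastforce+
  then show ?thesis
    using assms(2) unfolding partitions_def by fastforce
qed

lemma partitions_reflect: "xs \<in> partitions a b \<Longrightarrow> rev (map uminus xs) \<in> partitions (- b) (- a)"
  unfolding partitions_def by (auto simp: sorted_wrt_rev sorted_wrt_map)

lemma polygon_length_le_curve_length:
  "xs \<in> partitions a b \<Longrightarrow> ereal (polygon_length g xs) \<le> curve_length g a b"
  unfolding curve_length_conv_partitions by (rule SUP_upper)

lemma curve_length_le:
  "(\<And>xs. xs \<in> partitions a b \<Longrightarrow> polygon_length g xs \<le> M) \<Longrightarrow> curve_length g a b \<le> ereal M"
  unfolding curve_length_conv_partitions by (rule SUP_least) simp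

lemma curve_length_mono: "a \<le> a' \<Longrightarrow> b' \<le> b \<Longrightarrow> curve_length g a' b' \<le> curve_length g a b"
  unfolding curve_length_conv_partitions by (rule SUP_subset_mono[OF partitions_mono]) auto

lemma curve_length_nonneg: "a \<le> b \<Longrightarrow> 0 \<le> curve_length g a b"
  using polygon_length_le_curve_length[OF two_point_partition, of a b g]
    polygon_length_nonneg[of g "[a, b]"]
  by (simp add: order_trans[rotated])

lemma curve_length_reflect: "curve_length (\<lambda>t. g (- t)) (- b) (- a) = curve_length g a b"
proof -
  let ?r = "\<lambda>xs. rev (map uminus xs) :: real list"
  have "partitions (- b) (- a) = ?r ` partitions a b"
  proof
    show "?r ` partitions a b \<subseteq> partitions (- b) (- a)"
      using partitions_reflect by blast
    show "partitions (- b) (- a) \<subseteq> ?r ` partitions a b"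
    proof
      fix ys assume "ys \<in> partitions (- b) (- a)"
      then show "ys \<in> ?r ` partitions a b"
        using partitions_reflect[of ys "- b" "- a"] by (intro image_eqI[of _ _ "?r ys"]) (auto simp: rev_map)
    qed
  qed
  moreover have "polygon_length (\<lambda>t. g (- t)) (?r xs) = polygon_length g xs" for xs
    by (simp add: polygon_length_rev polygon_length_map)
  ultimately show ?thesis
    unfolding curve_length_conv_partitions by (simp add: image_comp)
qed

section \<open>Arc length\<close>

definition finite_length :: "(real \<Rightarrow> 'a::metric_space) \<Rightarrow> real \<Rightarrow> real \<Rightarrow> bool" where
  "finite_length g a b \<longleftrightarrow> a \<le> b \<and> curve_length g a b < \<infinity>"

text \<open>Only meaningful under \<open>finite_length\<close>: \<open>real_of_ereal\<close> sends both infinities to \<open>0\<close>.\<close>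
definition arc_length :: "(real \<Rightarrow> 'a::metric_space) \<Rightarrow> real \<Rightarrow> real \<Rightarrow> real" where
  "arc_length g a b = real_of_ereal (curve_length g a b)"

lemma finite_length_subinterval:
  "finite_length g a b \<Longrightarrow> a \<le> u \<Longrightarrow> u \<le> v \<Longrightarrow> v \<le> b \<Longrightarrow> finite_length g u v"
  unfolding finite_length_def using curve_length_mono[of a u v b g] by auto

lemma curve_length_eq_arc_length:
  "finite_length g a b \<Longrightarrow> curve_length g a b = ereal (arc_length g a b)"
  unfolding finite_length_def arc_length_def using curve_length_nonneg[of a b g]
  by (cases "curve_length g a b") auto

lemma arc_length_nonneg: "0 \<le> arc_length g a b"
proof (cases "a \<le> b")
  case True
  then show ?thesis
    unfolding arc_length_def by (intro real_of_ereal_pos curve_length_nonneg)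
next
  case False
  then have "partitions a b = {}"
    using partitions_imp_le by blast
  then show ?thesis
    unfolding arc_length_def curve_length_conv_partitions by (simp add: bot_ereal_def)
qed

lemma polygon_length_le_arc_length:
  "finite_length g a b \<Longrightarrow> xs \<in> partitions a b \<Longrightarrow> polygon_length g xs \<le> arc_length g a b"
  using polygon_length_le_curve_length[of xs a b g] curve_length_eq_arc_length[of g a b] by simp

lemma finite_length_if_polygons_bounded:
  "a \<le> b \<Longrightarrow> (\<And>xs. xs \<in> partitions a b \<Longrightarrow> polygon_length g xs \<le> M) \<Longrightarrow> finite_length g a b"
  unfolding finite_length_def using curve_length_le[of a b g M] by (auto simp: le_less_trans)

lemma arc_length_le_if_polygons_bounded:
  "a \<le> b \<Longrightarrow> (\<And>xs. xs \<in> partitions a b \<Longrightarrow> polygon_length g xs \<le> M) \<Longrightarrow> arc_length g a b \<le> M"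
  using curve_length_le[of a b g M] curve_length_eq_arc_length[of g a b]
    finite_length_if_polygons_bounded[of a b g M]
  by simp

lemma finite_length_if_lipschitz:
  assumes "C-lipschitz_on {a..b} g" "a \<le> b"
  shows "finite_length g a b"
  by (rule finite_length_if_polygons_bounded[OF assms(2) polygon_length_le_lipschitz[OF assms(1)]])

lemma lip_const_le: "C-lipschitz_on {0..1} \<gamma> \<Longrightarrow> lip_const \<gamma> \<le> C"
  unfolding lip_const_def
  by (rule cInf_lower) (auto intro: bdd_belowI[of _ 0] dest: lipschitz_on_nonneg)

lemma curve_length_le_lip_const:
  assumes "C-lipschitz_on {0..1} \<gamma>"
  shows "curve_length \<gamma> 0 1 \<le> ereal (lip_const \<gamma>)"
proof -
  have "arc_length \<gamma> 0 1 \<le> lip_const \<gamma>"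
    unfolding lip_const_def
  proof (rule cInf_greatest)
    fix C' assume "C' \<in> {C. C-lipschitz_on {0..1} \<gamma>}"
    then show "arc_length \<gamma> 0 1 \<le> C'"
      using polygon_length_le_lipschitz[of C' 0 1 \<gamma>] by (intro arc_length_le_if_polygons_bounded) auto
  qed (use assms in blast)
  then show ?thesis
    using curve_length_eq_arc_length[OF finite_length_if_lipschitz[OF assms]] by simp
qed

lemma arc_length_approx:
  assumes "finite_length g a b" "\<eta> > 0"
  obtains xs where "xs \<in> partitions a b" "hd xs = a" "last xs = b"
    "arc_length g a b - \<eta> < polygon_length g xs"
proof -
  have "\<exists>ys\<in>partitions a b. arc_length g a b - \<eta> < polygon_length g ys"
  proof (rule ccontr)
    assume "\<not> ?thesis"
    then have "arc_length g a b \<le> arc_length g a b - \<eta>"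
      using assms(1) unfolding finite_length_def by (intro arc_length_le_if_polygons_bounded) (auto simp: not_less)
    with assms(2) show False by simp
  qed
  then obtain ys where ys: "ys \<in> partitions a b" "arc_length g a b - \<eta> < polygon_length g ys"
    by blast
  have "polygon_length g ys \<le> polygon_length g (a # ys @ [b])"
    using polygon_length_Cons_ge[of g "ys @ [b]" a] polygon_length_snoc_ge[of g ys b] by simp
  with ys show ?thesis
    by (intro that[of "a # ys @ [b]"] partitions_pad) auto
qed

lemma arc_length_additive:
  assumes "finite_length g a c" "a \<le> m" "m \<le> c"
  shows "arc_length g a c = arc_length g a m + arc_length g m c"
proof (rule antisym)
  have fin: "finite_length g a m" "finite_length g m c"
    using finite_length_subinterval[OF assms(1)] assms(2,3) by auto
  show "arc_length g a c \<le> arc_length g a m + arc_length g m c"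
  proof (rule arc_length_le_if_polygons_bounded)
    fix xs assume xs: "xs \<in> partitions a c"
    have "polygon_length g xs \<le> polygon_length g (takeWhile (\<lambda>x. x \<le> m) xs @ [m])
        + polygon_length g (m # dropWhile (\<lambda>x. x \<le> m) xs)"
      using polygon_length_insert_le[of g "takeWhile (\<lambda>x. x \<le> m) xs" "dropWhile (\<lambda>x. x \<le> m) xs" m]
      by simp
    also have "\<dots> \<le> arc_length g a m + arc_length g m c"
      using xs assms(2,3)
      by (intro add_mono polygon_length_le_arc_length fin takeWhile_snoc_in_partitions
          dropWhile_Cons_in_partitions)
    finally show "polygon_length g xs \<le> arc_length g a m + arc_length g m c" .
  qed (use assms in simp)
  have "arc_length g a m \<le> arc_length g a c - polygon_length g ys"
    if ys: "ys \<in> partitions m c" for ys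
  proof (rule arc_length_le_if_polygons_bounded)
    fix xs assume xs: "xs \<in> partitions a m"
    have "polygon_length g xs + polygon_length g ys \<le> polygon_length g (xs @ ys)"
      using xs ys polygon_length_append[of xs ys g] unfolding partitions_def by auto
    also have "\<dots> \<le> arc_length g a c"
      by (rule polygon_length_le_arc_length[OF assms(1) partitions_append[OF xs ys]])
    finally show "polygon_length g xs \<le> arc_length g a c - polygon_length g ys"
      by simp
  qed (use assms in simp)
  then have "arc_length g m c \<le> arc_length g a c - arc_length g a m"
    using assms by (intro arc_length_le_if_polygons_bounded) (auto simp: algebra_simps)
  then show "arc_length g a m + arc_length g m c \<le> arc_length g a c"
    by simp
qed

lemma dist_le_arc_length: "finite_length g a b \<Longrightarrow> dist (g a) (g b) \<le> arc_length g a b"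
  using polygon_length_le_arc_length[OF _ two_point_partition, of g a b]
  unfolding finite_length_def by simp

lemma arc_length_mono:
  "finite_length g a b \<Longrightarrow> a \<le> u \<Longrightarrow> u \<le> v \<Longrightarrow> v \<le> b \<Longrightarrow> arc_length g u v \<le> arc_length g a b"
  using curve_length_mono[of a u v b g] curve_length_eq_arc_length[of g a b]
    curve_length_eq_arc_length[OF finite_length_subinterval, of g a b u v]
  by simp

lemma arc_length_refl [simp]: "arc_length g a a = 0"
proof -
  have "polygon_length g xs = 0" if "xs \<in> partitions a a" for xs
    using that unfolding partitions_def by (intro polygon_length_const) auto
  then have "arc_length g a a \<le> 0"
    by (intro arc_length_le_if_polygons_bounded) auto
  then show ?thesis
    using arc_length_nonneg[of g a a] by simp
qed

lemma arc_length_reflect: "arc_length (\<lambda>t. g (- t)) (- b) (- a) = arc_length g a b"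
  unfolding arc_length_def curve_length_reflect ..

lemma finite_length_reflect: "finite_length g a b \<Longrightarrow> finite_length (\<lambda>t. g (- t)) (- b) (- a)"
  unfolding finite_length_def curve_length_reflect by simp

lemma arc_length_diff:
  assumes "finite_length g a b" "a \<le> t" "t \<le> t'" "t' \<le> b"
  shows "arc_length g a t' - arc_length g a t = arc_length g t t'"
  using arc_length_additive[OF finite_length_subinterval[OF assms(1) order_refl _ assms(4)], of t]
    assms(2,3) by simp

lemma dist_le_arc_length_diff:
  assumes "finite_length g a b" "a \<le> t" "t \<le> t'" "t' \<le> b"
  shows "dist (g t) (g t') \<le> arc_length g a t' - arc_length g a t"
  using dist_le_arc_length[OF finite_length_subinterval[OF assms]] arc_length_diff[OF assms] by simp

lemma arc_length_mono_right:
  assumes "finite_length g a b" "a \<le> t" "t \<le> t'" "t' \<le> b"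
  shows "arc_length g a t \<le> arc_length g a t'"
  using arc_length_diff[OF assms] arc_length_nonneg[of g t t'] by simp

lemma arc_length_right_small:
  assumes g: "continuous_on {a..b} g" and fin: "finite_length g a b" and "a < b" "\<delta> > 0"
  obtains h where "h > 0" "a + h \<le> b" "arc_length g a (a + h) < \<delta>"
proof -
  obtain xs where xs: "xs \<in> partitions a b" "arc_length g a b - \<delta> / 2 < polygon_length g xs"
    using arc_length_approx[OF fin, of "\<delta> / 2"] \<open>\<delta> > 0\<close> by auto
  obtain \<rho> where \<rho>: "\<rho> > 0" "\<And>t. t \<in> {a..b} \<Longrightarrow> dist t a < \<rho> \<Longrightarrow> dist (g t) (g a) < \<delta> / 2"
    using g \<open>a < b\<close> \<open>\<delta> > 0\<close> unfolding continuous_on_iff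
    by (metis atLeastAtMost_iff half_gt_zero less_imp_le order_refl)
  obtain d where d: "d > 0" "\<And>x. x \<in> set xs \<Longrightarrow> x \<noteq> a \<Longrightarrow> d \<le> dist a x"
    using finite_set_avoid[of "set xs" a] by auto
  \<comment> \<open>No partition point lies in \<open>(a, a + h]\<close>, so on \<open>[a, a + h]\<close> the polygon only sees \<open>dist (g a) (g (a + h))\<close>.\<close>
  define h where "h = Min {\<rho>, b - a, d} / 2"
  define c where "c = a + h"
  have h: "0 < h" "h < \<rho>" "c \<le> b" "h < d"
    using \<rho>(1) d(1) \<open>a < b\<close> unfolding h_def c_def by (auto simp: min_def field_simps)
  let ?t = "takeWhile (\<lambda>x. x \<le> c) xs" and ?d = "dropWhile (\<lambda>x. x \<le> c) xs"
  have "set ?t \<subseteq> {a}"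
  proof
    fix x assume "x \<in> set ?t"
    then have "x \<in> set xs" "x \<le> c"
      by (auto dest: set_takeWhileD)
    moreover have "a \<le> x"
      using \<open>x \<in> set xs\<close> xs(1) unfolding partitions_def by auto
    ultimately show "x \<in> {a}"
      using d(2)[of x] h unfolding c_def dist_real_def by fastforce
  qed
  have "polygon_length g xs \<le> polygon_length g (?t @ [c]) + polygon_length g (c # ?d)"
    using polygon_length_insert_le[of g ?t ?d c] by simp
  also have "\<dots> \<le> dist (g a) (g c) + arc_length g c b"
    using h \<open>a < b\<close>
    by (intro add_mono polygon_length_const_snoc[OF \<open>set ?t \<subseteq> {a}\<close>] polygon_length_le_arc_length
        finite_length_subinterval[OF fin] dropWhile_Cons_in_partitions[OF xs(1)]) (auto simp: c_def)
  also have "dist (g a) (g c) < \<delta> / 2"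
    using \<rho>(2)[of c] h \<open>a < b\<close> by (simp add: c_def dist_real_def dist_commute)
  finally have "polygon_length g xs < \<delta> / 2 + arc_length g c b"
    by simp
  moreover have "arc_length g a b = arc_length g a c + arc_length g c b"
    using arc_length_additive[OF fin] h unfolding c_def by simp
  ultimately show thesis
    using that[of h] xs(2) h unfolding c_def by simp
qed

lemma arc_length_right_continuous:
  assumes g: "continuous_on {a..b} g" and fin: "finite_length g a b" and "e > 0"
  obtains h where "h > 0" "\<And>t. t \<in> {a..b} \<Longrightarrow> t < a + h \<Longrightarrow> arc_length g a t < e"
proof (cases "a < b")
  case True
  then obtain h where h: "h > 0" "a + h \<le> b" "arc_length g a (a + h) < e"
    using arc_length_right_small[OF g fin _ \<open>e > 0\<close>] by blast
  have "finite_length g a (a + h)"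
    using finite_length_subinterval[OF fin] h by simp
  then have "arc_length g a t < e" if "t \<in> {a..b}" "t < a + h" for t
    using that h(3) arc_length_mono[of g a "a + h" a t] by simp
  with h(1) show thesis
    using that by blast
next
  case False
  with fin have "a = b"
    unfolding finite_length_def by simp
  with \<open>e > 0\<close> show thesis
    using that[of 1] by simp
qed

lemma arc_length_left_continuous:
  assumes g: "continuous_on {a..b} g" and fin: "finite_length g a b" and "e > 0"
  obtains h where "h > 0" "\<And>t. t \<in> {a..b} \<Longrightarrow> b - h < t \<Longrightarrow> arc_length g t b < e"
proof -
  have "continuous_on {- b..- a} (\<lambda>t. g (- t))"
    by (rule continuous_on_compose2[OF g]) (auto intro: continuous_intros)
  then obtain h where "h > 0"
    and h: "\<And>t. t \<in> {- b..- a} \<Longrightarrow> t < - b + h \<Longrightarrow> arc_length (\<lambda>t. g (- t)) (- b) t < e"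
    using arc_length_right_continuous finite_length_reflect[OF fin] \<open>e > 0\<close> by metis
  have "arc_length g t b < e" if "t \<in> {a..b}" "b - h < t" for t
    using h[of "- t"] that arc_length_reflect[where g = g and a = t and b = b] by simp
  with \<open>h > 0\<close> show thesis
    using that by blast
qed

lemma continuous_on_arc_length:
  assumes g: "continuous_on {a..b} g" and fin: "finite_length g a b"
  shows "continuous_on {a..b} (arc_length g a)"
  unfolding continuous_on_iff
proof (intro ballI allI impI)
  fix t0 e :: real assume t0: "t0 \<in> {a..b}" and "e > 0"
  obtain h1 where "h1 > 0" and h1: "\<And>t. t \<in> {t0..b} \<Longrightarrow> t < t0 + h1 \<Longrightarrow> arc_length g t0 t < e"
    using arc_length_right_continuous[OF continuous_on_subset[OF g] finite_length_subinterval[OF fin]]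
      t0 \<open>e > 0\<close> by (metis atLeastAtMost_iff atLeastatMost_subset_iff order_refl)
  obtain h2 where "h2 > 0" and h2: "\<And>t. t \<in> {a..t0} \<Longrightarrow> t0 - h2 < t \<Longrightarrow> arc_length g t t0 < e"
    using arc_length_left_continuous[OF continuous_on_subset[OF g] finite_length_subinterval[OF fin]]
      t0 \<open>e > 0\<close> by (metis atLeastAtMost_iff atLeastatMost_subset_iff order_refl)
  have "dist (arc_length g a t) (arc_length g a t0) < e"
    if t: "t \<in> {a..b}" "dist t t0 < min h1 h2" for t
  proof (cases "t0 \<le> t")
    case True
    then show ?thesis
      using h1[of t] t t0 arc_length_diff[OF fin, of t0 t] arc_length_nonneg[of g t0 t]
      by (auto simp: dist_real_def)
  next
    case False
    then show ?thesis
      using h2[of t] t t0 arc_length_diff[OF fin, of t t0] arc_length_nonneg[of g t t0]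
      by (auto simp: dist_real_def)
  qed
  then show "\<exists>d>0. \<forall>t\<in>{a..b}. dist t t0 < d \<longrightarrow> dist (arc_length g a t) (arc_length g a t0) < e"
    using \<open>h1 > 0\<close> \<open>h2 > 0\<close> by (intro exI[of _ "min h1 h2"]) auto
qed

section \<open>Reparametrisation by arc length\<close>

lemma dist_le_arc_length_abs_diff:
  assumes "finite_length g a b" "t \<in> {a..b}" "t' \<in> {a..b}"
  shows "dist (g t) (g t') \<le> \<bar>arc_length g a t - arc_length g a t'\<bar>"
proof (cases "t \<le> t'")
  case True
  then show ?thesis
    using dist_le_arc_length_diff[OF assms(1), of t t'] assms(2,3) by simp
next
  case False
  then show ?thesis
    using dist_le_arc_length_diff[OF assms(1), of t' t] assms(2,3) by (simp add: dist_commute)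
qed

text \<open>The choice below does not matter: by \<open>dist_le_arc_length_abs_diff\<close>, \<open>g\<close> is constant on
  each level set of the arc length function.\<close>
definition arc_length_reparam :: "(real \<Rightarrow> 'a::metric_space) \<Rightarrow> real \<Rightarrow> real \<Rightarrow> real \<Rightarrow> 'a" where
  "arc_length_reparam g a b u = g (SOME t. t \<in> {a..b} \<and> arc_length g a t = arc_length g a b * u)"

context
  fixes g :: "real \<Rightarrow> 'a::metric_space" and a b :: real
  assumes g: "continuous_on {a..b} g" and fin: "finite_length g a b"
begin

lemma arc_length_surj:
  assumes "u \<in> {0..1}"
  shows "\<exists>t\<in>{a..b}. arc_length g a t = arc_length g a b * u"
proof -
  have "a \<le> b"
    using fin unfolding finite_length_def by simp
  moreover have "arc_length g a a \<le> arc_length g a b * u" "arc_length g a b * u \<le> arc_length g a b"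
    using assms arc_length_nonneg[of g a b] by (auto intro: mult_left_le)
  ultimately obtain t where "a \<le> t" "t \<le> b" "arc_length g a t = arc_length g a b * u"
    using IVT'[of "arc_length g a" a "arc_length g a b * u" b] continuous_on_arc_length[OF g fin]
    by blast
  then show ?thesis
    by auto
qed

lemma arc_length_reparam_eqI:
  assumes "u \<in> {0..1}" "t \<in> {a..b}" "arc_length g a t = arc_length g a b * u"
  shows "arc_length_reparam g a b u = g t"
proof -
  let ?t = "SOME t. t \<in> {a..b} \<and> arc_length g a t = arc_length g a b * u"
  have "?t \<in> {a..b} \<and> arc_length g a ?t = arc_length g a b * u"
    using someI_ex[OF arc_length_surj[OF assms(1), unfolded Bex_def]] .
  then have "dist (g ?t) (g t) \<le> 0"
    using dist_le_arc_length_abs_diff[OF fin, of ?t t] assms(2,3) by simp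
  then show ?thesis
    unfolding arc_length_reparam_def by simp
qed

lemma lipschitz_arc_length_reparam:
  "(arc_length g a b)-lipschitz_on {0..1} (arc_length_reparam g a b)"
proof (rule lipschitz_onI)
  fix u v :: real assume "u \<in> {0..1}" "v \<in> {0..1}"
  then obtain t t' where t: "t \<in> {a..b}" "arc_length g a t = arc_length g a b * u"
    and t': "t' \<in> {a..b}" "arc_length g a t' = arc_length g a b * v"
    using arc_length_surj by meson
  have "dist (arc_length_reparam g a b u) (arc_length_reparam g a b v) = dist (g t) (g t')"
    using \<open>u \<in> {0..1}\<close> \<open>v \<in> {0..1}\<close> t t' by (simp add: arc_length_reparam_eqI)
  also have "\<dots> \<le> \<bar>arc_length g a b * u - arc_length g a b * v\<bar>"
    using dist_le_arc_length_abs_diff[OF fin t(1) t'(1)] t(2) t'(2) by simp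
  also have "\<dots> = arc_length g a b * dist u v"
    using arc_length_nonneg[of g a b] by (simp add: dist_real_def abs_mult flip: right_diff_distrib)
  finally show "dist (arc_length_reparam g a b u) (arc_length_reparam g a b v) \<le> arc_length g a b * dist u v" .
qed (rule arc_length_nonneg)

text \<open>For a constant curve the quotient below is \<open>x / 0 = 0\<close>, which is still a correct parameter.\<close>
lemma arc_length_reparam_arc_length:
  assumes "t \<in> {a..b}"
  shows "arc_length g a t / arc_length g a b \<in> {0..1}"
    and "arc_length_reparam g a b (arc_length g a t / arc_length g a b) = g t"
proof -
  have "arc_length g a t \<le> arc_length g a b"
    using arc_length_mono[OF fin, of a t] assms by simp
  then show u: "arc_length g a t / arc_length g a b \<in> {0..1}"
    using arc_length_nonneg[of g a t] by (cases "arc_length g a b = 0") (simp_all add: divide_le_eq_1)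
  have "arc_length g a t = arc_length g a b * (arc_length g a t / arc_length g a b)"
    using \<open>arc_length g a t \<le> arc_length g a b\<close> arc_length_nonneg[of g a t] arc_length_nonneg[of g a b]
    by (cases "arc_length g a b = 0") simp_all
  then show "arc_length_reparam g a b (arc_length g a t / arc_length g a b) = g t"
    by (rule arc_length_reparam_eqI[OF u assms])
qed

lemma image_arc_length_reparam: "arc_length_reparam g a b ` {0..1} = g ` {a..b}"
proof
  show "arc_length_reparam g a b ` {0..1} \<subseteq> g ` {a..b}"
  proof (rule image_subsetI)
    fix u :: real assume "u \<in> {0..1}"
    then obtain t where "t \<in> {a..b}" "arc_length g a t = arc_length g a b * u"
      using arc_length_surj by blast
    then show "arc_length_reparam g a b u \<in> g ` {a..b}"
      using arc_length_reparam_eqI[OF \<open>u \<in> {0..1}\<close>] by simp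
  qed
  show "g ` {a..b} \<subseteq> arc_length_reparam g a b ` {0..1}"
  proof (rule image_subsetI)
    fix t assume "t \<in> {a..b}"
    then show "g t \<in> arc_length_reparam g a b ` {0..1}"
      using arc_length_reparam_arc_length[of t] by (metis image_eqI)
  qed
qed

lemma arc_length_reparam_endpoints:
  "arc_length_reparam g a b 0 = g a" "arc_length_reparam g a b 1 = g b"
  using fin arc_length_reparam_eqI[of 0 a] arc_length_reparam_eqI[of 1 b]
  unfolding finite_length_def by simp_all

lemma arc_length_le_curve_length_reparam:
  "ereal (arc_length g a b) \<le> curve_length (arc_length_reparam g a b) 0 1"
proof -
  let ?u = "\<lambda>t. arc_length g a t / arc_length g a b"
  have "ereal (polygon_length g xs) \<le> curve_length (arc_length_reparam g a b) 0 1"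
    if xs: "xs \<in> partitions a b" for xs
  proof -
    have sub: "set xs \<subseteq> {a..b}" and "sorted xs"
      using xs unfolding partitions_def by auto
    have "?u s \<le> ?u t" if "s \<in> set xs" "t \<in> set xs" "s \<le> t" for s t
      using that subsetD[OF sub] arc_length_mono_right[OF fin, of s t] arc_length_nonneg[of g a b]
      by (intro divide_right_mono) auto
    then have "sorted (map ?u xs)"
      unfolding sorted_map using \<open>sorted xs\<close> by (rule sorted_wrt_mono_rel)
    moreover have "set (map ?u xs) \<subseteq> {0..1}"
      by (auto intro!: arc_length_reparam_arc_length(1) subsetD[OF sub])
    ultimately have "map ?u xs \<in> partitions 0 1"
      using xs unfolding partitions_def by simp
    moreover have "polygon_length (arc_length_reparam g a b) (map ?u xs) = polygon_length g xs"
      by (intro polygon_length_map arc_length_reparam_arc_length(2) subsetD[OF sub])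
    ultimately show ?thesis
      using polygon_length_le_curve_length[of "map ?u xs" 0 1 "arc_length_reparam g a b"] by simp
  qed
  then have "curve_length g a b \<le> curve_length (arc_length_reparam g a b) 0 1"
    unfolding curve_length_conv_partitions[of g] by (rule SUP_least)
  then show ?thesis
    using curve_length_eq_arc_length[OF fin] by simp
qed

end

section \<open>Metric derivative of a curve whose length is its Lipschitz constant\<close>

lemma sum_increments_disjoint_le:
  fixes \<phi> :: "real \<Rightarrow> real" and F :: "(real \<times> real) set"
  assumes "finite F" "p \<le> q" "mono_on {p..q} \<phi>"
    and "\<And>c. c \<in> F \<Longrightarrow> p \<le> fst c \<and> fst c \<le> snd c \<and> snd c \<le> q"
    and "pairwise (\<lambda>c c'. disjnt {fst c..snd c} {fst c'..snd c'}) F"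
  shows "(\<Sum>c\<in>F. \<phi> (snd c) - \<phi> (fst c)) \<le> \<phi> q - \<phi> p"
  using assms
proof (induction F arbitrary: q rule: finite_remove_induct)
  case empty
  then show ?case
    by (auto dest: mono_onD)
next
  case (remove F)
  have "Max (fst ` F) \<in> fst ` F"
    using remove.hyps(1,2) by (intro Max_in) auto
  then obtain c0 where c0: "c0 \<in> F" "fst c0 = Max (fst ` F)"
    by (metis imageE)
  have left: "snd c < fst c0" if "c \<in> F - {c0}" for c
  proof (rule ccontr)
    assume "\<not> snd c < fst c0"
    moreover have "fst c \<le> fst c0"
      using c0 remove.hyps(1) that by simp
    ultimately have "fst c0 \<in> {fst c..snd c} \<inter> {fst c0..snd c0}"
      using remove.prems(3)[of c0] c0(1) by auto
    then show False
      using remove.prems(4) c0(1) that unfolding pairwise_def disjnt_def by blast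
  qed
  have "(\<Sum>c\<in>F - {c0}. \<phi> (snd c) - \<phi> (fst c)) \<le> \<phi> (fst c0) - \<phi> p"
  proof (rule remove.IH[OF c0(1)])
    show "p \<le> fst c0" "mono_on {p..fst c0} \<phi>"
      using remove.prems(2) remove.prems(3)[of c0] c0(1) by (auto elim: mono_on_subset)
    show "p \<le> fst c \<and> fst c \<le> snd c \<and> snd c \<le> fst c0" if "c \<in> F - {c0}" for c
      using remove.prems(3)[of c] left[OF that] that by auto
    show "pairwise (\<lambda>c c'. disjnt {fst c..snd c} {fst c'..snd c'}) (F - {c0})"
      using remove.prems(4) by (rule pairwise_subset) auto
  qed
  moreover have "\<phi> (snd c0) \<le> \<phi> q"
    using remove.prems(2) remove.prems(3)[of c0] c0(1) by (auto intro: mono_onD)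
  ultimately show ?case
    using remove.hyps(1) c0(1) by (simp add: sum.remove)
qed

lemma sum_steep_lengths_le:
  fixes \<phi> :: "real \<Rightarrow> real" and F :: "(real \<times> real) set"
  assumes "finite F" "p \<le> q" "mono_on {p..q} \<phi>"
    and "\<And>c. c \<in> F \<Longrightarrow> p \<le> fst c \<and> fst c \<le> snd c \<and> snd c \<le> q \<and>
      \<epsilon> * (snd c - fst c) \<le> \<phi> (snd c) - \<phi> (fst c)"
    and "pairwise (\<lambda>c c'. disjnt {fst c..snd c} {fst c'..snd c'}) F"
  shows "\<epsilon> * (\<Sum>c\<in>F. snd c - fst c) \<le> \<phi> q - \<phi> p"
proof -
  have "\<epsilon> * (\<Sum>c\<in>F. snd c - fst c) \<le> (\<Sum>c\<in>F. \<phi> (snd c) - \<phi> (fst c))"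
    unfolding sum_distrib_left using assms(4) by (intro sum_mono) auto
  also have "\<dots> \<le> \<phi> q - \<phi> p"
    using assms(4) by (intro sum_increments_disjoint_le[OF assms(1-3) _ assms(5)]) auto
  finally show ?thesis .
qed

lemma steep_points_outer_measure_le:
  fixes \<phi> :: "real \<Rightarrow> real"
  assumes "p \<le> q" "mono_on {p..q} \<phi>" "\<epsilon> > 0"
    and steep: "\<And>t. t \<in> S \<Longrightarrow> \<exists>l r. p \<le> l \<and> l < r \<and> r \<le> q \<and> t \<in> {l..r} \<and> \<epsilon> * (r - l) < \<phi> r - \<phi> l"
  obtains T where "S \<subseteq> T" "T \<in> lmeasurable" "measure lebesgue T \<le> 5 * (\<phi> q - \<phi> p) / \<epsilon>"
proof -
  define K where "K = {c. p \<le> fst c \<and> fst c < snd c \<and> snd c \<le> q \<and>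
    \<epsilon> * (snd c - fst c) < \<phi> (snd c) - \<phi> (fst c)}"
  define ctr where "ctr c = (fst c + snd c) / 2" for c :: "real \<times> real"
  define rad where "rad c = (snd c - fst c) / 2" for c :: "real \<times> real"
  have cball_eq: "cball (ctr c) (rad c) = {fst c..snd c}" for c
    unfolding ctr_def rad_def by (simp add: atLeastAtMost_eq_cball)
  have "S \<subseteq> (\<Union>c\<in>K. cball (ctr c) (rad c))"
  proof
    fix t assume "t \<in> S"
    then obtain l r where "p \<le> l" "l < r" "r \<le> q" "t \<in> {l..r}" "\<epsilon> * (r - l) < \<phi> r - \<phi> l"
      using steep by blast
    then show "t \<in> (\<Union>c\<in>K. cball (ctr c) (rad c))"
      unfolding cball_eq K_def by (intro UN_I[of "(l, r)"]) auto
  qed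
  moreover have "0 < rad c \<and> rad c \<le> q - p" if "c \<in> K" for c
    using that unfolding K_def rad_def by auto
  ultimately obtain C where C: "countable C" "C \<subseteq> K"
      "pairwise (\<lambda>c c'. disjnt (cball (ctr c) (rad c)) (cball (ctr c') (rad c'))) C"
      "S \<subseteq> (\<Union>c\<in>C. cball (ctr c) (5 * rad c))"
    by (rule Vitali_covering_lemma_cballs)
  have total_length: "\<epsilon> * (\<Sum>c\<in>F. snd c - fst c) \<le> \<phi> q - \<phi> p" if F: "F \<subseteq> C" "finite F" for F
  proof (rule sum_steep_lengths_le[OF F(2) assms(1,2)])
    show "pairwise (\<lambda>c c'. disjnt {fst c..snd c} {fst c'..snd c'}) F"
      using pairwise_subset[OF C(3) F(1)] unfolding cball_eq .
  qed (use F(1) C(2) in \<open>auto simp: K_def\<close>)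
  have bound: "measure lebesgue (\<Union>\<E>) \<le> 5 * (\<phi> q - \<phi> p) / \<epsilon>"
    if \<E>: "\<E> \<subseteq> (\<lambda>c. cball (ctr c) (5 * rad c)) ` C" "finite \<E>" for \<E>
  proof -
    obtain F where F: "F \<subseteq> C" "finite F" "\<E> = (\<lambda>c. cball (ctr c) (5 * rad c)) ` F"
      using finite_subset_image[OF \<E>(2,1)] by blast
    have "measure lebesgue (\<Union>\<E>) \<le> (\<Sum>c\<in>F. measure lebesgue (cball (ctr c) (5 * rad c)))"
      unfolding F(3) by (rule measure_UNION_le) (use F in auto)
    also have "\<dots> = 5 * (\<Sum>c\<in>F. snd c - fst c)"
      unfolding sum_distrib_left
    proof (rule sum.cong)
      fix c assume "c \<in> F"
      then have "0 \<le> 5 * rad c"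
        using F(1) C(2) unfolding K_def rad_def by auto
      then have "measure lebesgue (cball (ctr c) (5 * rad c)) = 2 * (5 * rad c)"
        by (simp add: cball_eq_atLeastAtMost)
      then show "measure lebesgue (cball (ctr c) (5 * rad c)) = 5 * (snd c - fst c)"
        by (simp add: rad_def)
    qed simp
    also have "\<dots> \<le> 5 * (\<phi> q - \<phi> p) / \<epsilon>"
      using total_length[OF F(1,2)] \<open>\<epsilon> > 0\<close> by (simp add: field_simps)
    finally show ?thesis .
  qed
  have "(\<Union>c\<in>C. cball (ctr c) (5 * rad c)) \<in> lmeasurable"
    by (rule fmeasurable_Union_bound[OF _ _ bound]) (use C(1) in auto)
  moreover have "measure lebesgue (\<Union>c\<in>C. cball (ctr c) (5 * rad c)) \<le> 5 * (\<phi> q - \<phi> p) / \<epsilon>"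
    by (rule measure_Union_bound[OF _ _ bound]) (use C(1) in auto)
  ultimately show thesis
    using that C(4) by blast
qed

definition slow_points :: "(real \<Rightarrow> 'a::metric_space) \<Rightarrow> real \<Rightarrow> real \<Rightarrow> real set" where
  "slow_points \<sigma> c \<epsilon> = {t \<in> {0<..<1}.
     \<exists>\<^sub>F s in at t within {0..1}. dist (\<sigma> s) (\<sigma> t) < (c - \<epsilon>) * dist s t}"

lemma slow_points_interval_cover:
  fixes \<sigma> :: "real \<Rightarrow> 'a::metric_space"
  assumes lip: "c-lipschitz_on {0..1} \<sigma>" and "\<epsilon> > 0" "0 \<le> p" "p \<le> q" "q \<le> 1"
  obtains T where "slow_points \<sigma> c \<epsilon> \<inter> {p<..<q} \<subseteq> T" "T \<in> lmeasurable"
    "measure lebesgue T \<le> 5 * (c * (q - p) - dist (\<sigma> p) (\<sigma> q)) / \<epsilon>"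
proof -
  define \<phi> where "\<phi> u = c * u - dist (\<sigma> u) (\<sigma> p)" for u
  have increment: "c * (r - l) - dist (\<sigma> l) (\<sigma> r) \<le> \<phi> r - \<phi> l" for l r
    using dist_triangle[of "\<sigma> r" "\<sigma> p" "\<sigma> l"] unfolding \<phi>_def by (simp add: dist_commute algebra_simps)
  have "mono_on {p..q} \<phi>"
  proof (rule mono_onI)
    fix l r assume "l \<in> {p..q}" "r \<in> {p..q}" "l \<le> r"
    then have "dist (\<sigma> l) (\<sigma> r) \<le> c * (r - l)"
      using lipschitz_onD[OF lip, of l r] assms(3-5) by (simp add: dist_real_def)
    then show "\<phi> l \<le> \<phi> r"
      using increment[of r l] by simp
  qed
  moreover have "\<exists>l r. p \<le> l \<and> l < r \<and> r \<le> q \<and> t \<in> {l..r} \<and> \<epsilon> * (r - l) < \<phi> r - \<phi> l"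
    if t: "t \<in> slow_points \<sigma> c \<epsilon> \<inter> {p<..<q}" for t
  proof -
    have "\<exists>\<^sub>F s in at t within {0..1}. dist (\<sigma> s) (\<sigma> t) < (c - \<epsilon>) * dist s t"
      using t unfolding slow_points_def by blast
    then have "\<forall>d>0. \<exists>s\<in>{0..1}. s \<noteq> t \<and> dist s t < d \<and> dist (\<sigma> s) (\<sigma> t) < (c - \<epsilon>) * dist s t"
      unfolding frequently_def eventually_at by meson
    moreover have "min (t - p) (q - t) > 0"
      using t by auto
    ultimately obtain s where s: "s \<in> {0..1}" "s \<noteq> t" "dist s t < min (t - p) (q - t)"
      "dist (\<sigma> s) (\<sigma> t) < (c - \<epsilon>) * dist s t"
      by blast
    define l r where "l = min s t" and "r = max s t"
    have "p < l" "l < r" "r < q" "t \<in> {l..r}" "r - l = dist s t"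
      using s t unfolding l_def r_def by (auto simp: dist_real_def)
    moreover have "dist (\<sigma> l) (\<sigma> r) = dist (\<sigma> s) (\<sigma> t)"
      unfolding l_def r_def by (cases "s \<le> t") (auto simp: dist_commute)
    ultimately have "\<epsilon> * (r - l) < \<phi> r - \<phi> l"
      using s(4) increment[of r l] by (simp add: algebra_simps)
    with \<open>p < l\<close> \<open>l < r\<close> \<open>r < q\<close> \<open>t \<in> {l..r}\<close> show ?thesis
      by (intro exI[of _ l] exI[of _ r]) auto
  qed
  ultimately obtain T where "slow_points \<sigma> c \<epsilon> \<inter> {p<..<q} \<subseteq> T" "T \<in> lmeasurable"
    "measure lebesgue T \<le> 5 * (\<phi> q - \<phi> p) / \<epsilon>"
    using steep_points_outer_measure_le[OF \<open>p \<le> q\<close> _ \<open>\<epsilon> > 0\<close>] by metis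
  moreover have "\<phi> q - \<phi> p = c * (q - p) - dist (\<sigma> p) (\<sigma> q)"
    unfolding \<phi>_def by (simp add: dist_commute algebra_simps)
  ultimately show thesis
    using that by simp
qed

lemma sorted_nth_gap:
  fixes xs :: "real list"
  assumes "sorted xs" "xs \<noteq> []" "hd xs \<le> t" "t \<le> last xs" "t \<notin> set xs"
  shows "\<exists>i. Suc i < length xs \<and> xs ! i < t \<and> t < xs ! Suc i"
  using assms
proof (induction xs rule: induct_list012)
  case (3 x y zs)
  show ?case
  proof (cases "t < y")
    case True
    then show ?thesis
      using "3.prems" by (intro exI[of _ 0]) auto
  next
    case False
    then obtain i where "Suc i < length (y # zs)" "(y # zs) ! i < t" "t < (y # zs) ! Suc i"
      using "3.IH"(2) "3.prems" by auto
    then show ?thesis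
      by (intro exI[of _ "Suc i"]) auto
  qed
qed auto

lemma slow_points_outer_measure_le:
  fixes \<sigma> :: "real \<Rightarrow> 'a::metric_space"
  assumes lip: "c-lipschitz_on {0..1} \<sigma>" and "\<epsilon> > 0"
    and us: "us \<in> partitions 0 1" "hd us = 0" "last us = 1"
  obtains U where "slow_points \<sigma> c \<epsilon> \<subseteq> U" "U \<in> lmeasurable"
    "measure lebesgue U \<le> 5 / \<epsilon> * (c - polygon_length \<sigma> us)"
proof -
  define n where "n = length us - 1"
  have len_us: "length us = Suc n" and "sorted us"
    using us(1) unfolding partitions_def n_def by auto
  then have "0 \<le> us ! i \<and> us ! i \<le> us ! Suc i \<and> us ! Suc i \<le> 1" if "i < n" for i
    using partitions_nth_bounds[OF us(1), of i] that by simp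
  then have "\<forall>i<n. \<exists>T. slow_points \<sigma> c \<epsilon> \<inter> {us ! i<..<us ! Suc i} \<subseteq> T \<and> T \<in> lmeasurable \<and>
      measure lebesgue T \<le> 5 * (c * (us ! Suc i - us ! i) - dist (\<sigma> (us ! i)) (\<sigma> (us ! Suc i))) / \<epsilon>"
    using slow_points_interval_cover[OF lip \<open>\<epsilon> > 0\<close>] by metis
  then obtain T where T: "\<And>i. i < n \<Longrightarrow> slow_points \<sigma> c \<epsilon> \<inter> {us ! i<..<us ! Suc i} \<subseteq> T i"
    "\<And>i. i < n \<Longrightarrow> T i \<in> lmeasurable"
    "\<And>i. i < n \<Longrightarrow> measure lebesgue (T i) \<le>
        5 * (c * (us ! Suc i - us ! i) - dist (\<sigma> (us ! i)) (\<sigma> (us ! Suc i))) / \<epsilon>"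
    by metis
  have us_lmeasurable: "set us \<in> lmeasurable" and "measure lebesgue (set us) = 0"
    by (simp_all add: negligible_imp_measurable negligible_imp_measure0 negligible_finite)
  define U where "U = (\<Union>i<n. T i) \<union> set us"
  have "slow_points \<sigma> c \<epsilon> \<subseteq> U"
  proof
    fix t assume t: "t \<in> slow_points \<sigma> c \<epsilon>"
    show "t \<in> U"
    proof (cases "t \<in> set us")
      case False
      have "t \<in> {0<..<1}"
        using t unfolding slow_points_def by auto
      then obtain i where "Suc i < length us" "us ! i < t" "t < us ! Suc i"
        using sorted_nth_gap[OF \<open>sorted us\<close> _ _ _ False] us unfolding partitions_def by auto
      then show ?thesis
        using T(1)[of i] t len_us unfolding U_def by auto
    qed (simp add: U_def)
  qed
  moreover have "U \<in> lmeasurable"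
    unfolding U_def using T(2) us_lmeasurable by auto
  moreover have "measure lebesgue U \<le> 5 / \<epsilon> * (c - polygon_length \<sigma> us)"
  proof -
    have "measure lebesgue U \<le> measure lebesgue (\<Union>i<n. T i) + measure lebesgue (set us)"
      unfolding U_def using T(2) us_lmeasurable by (intro measure_Un_le) auto
    also have "measure lebesgue (set us) = 0"
      by fact
    also have "measure lebesgue (\<Union>i<n. T i) \<le> (\<Sum>i<n. measure lebesgue (T i))"
      using T(2) by (intro measure_UNION_le) auto
    also have "\<dots> \<le> (\<Sum>i<n. 5 / \<epsilon> * (c * (us ! Suc i - us ! i) - dist (\<sigma> (us ! i)) (\<sigma> (us ! Suc i))))"
      using T(3) by (intro sum_mono) simp
    also have "\<dots> = 5 / \<epsilon> * (c - polygon_length \<sigma> us)"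
      unfolding sum_distrib_left[symmetric] polygon_length_defect_telescope[OF len_us] us(2,3) by simp
    finally show ?thesis
      by simp
  qed
  ultimately show thesis
    using that by blast
qed

lemma slow_points_negligible:
  fixes \<sigma> :: "real \<Rightarrow> 'a::metric_space"
  assumes lip: "c-lipschitz_on {0..1} \<sigma>" and len: "ereal c \<le> curve_length \<sigma> 0 1" and "\<epsilon> > 0"
  shows "negligible (slow_points \<sigma> c \<epsilon>)"
  unfolding negligible_outer_le
proof (intro allI impI)
  fix e :: real assume "e > 0"
  have fin: "finite_length \<sigma> 0 1"
    using finite_length_if_lipschitz[OF lip] by simp
  obtain us where us: "us \<in> partitions 0 1" "hd us = 0" "last us = 1"
      "arc_length \<sigma> 0 1 - e * \<epsilon> / 5 < polygon_length \<sigma> us"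
    using arc_length_approx[OF fin, of "e * \<epsilon> / 5"] \<open>e > 0\<close> \<open>\<epsilon> > 0\<close> by auto
  moreover have "c \<le> arc_length \<sigma> 0 1"
    using len curve_length_eq_arc_length[OF fin] by simp
  ultimately have "5 / \<epsilon> * (c - polygon_length \<sigma> us) \<le> e"
    using \<open>\<epsilon> > 0\<close> by (simp add: field_simps)
  moreover obtain U where "slow_points \<sigma> c \<epsilon> \<subseteq> U" "U \<in> lmeasurable"
    "measure lebesgue U \<le> 5 / \<epsilon> * (c - polygon_length \<sigma> us)"
    using slow_points_outer_measure_le[OF lip \<open>\<epsilon> > 0\<close> us(1-3)] by blast
  ultimately show "\<exists>U. slow_points \<sigma> c \<epsilon> \<subseteq> U \<and> U \<in> lmeasurable \<and> measure lebesgue U \<le> e"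
    by (intro exI[of _ U]) simp
qed

lemma metric_derivative_eq_lipschitz_constant:
  fixes \<sigma> :: "real \<Rightarrow> 'a::metric_space"
  assumes lip: "c-lipschitz_on {0..1} \<sigma>" and len: "ereal c \<le> curve_length \<sigma> 0 1"
  shows "AE t in lebesgue_on {0..1}. ((\<lambda>s. dist (\<sigma> s) (\<sigma> t) / \<bar>s - t\<bar>) \<longlongrightarrow> c) (at t within {0..1})"
proof -
  define N where "N = (\<Union>n. slow_points \<sigma> c (1 / Suc n)) \<union> {0, 1}"
  have "negligible N"
    unfolding N_def using slow_points_negligible[OF lip len]
    by (intro negligible_Un negligible_countable_Union) (auto intro: negligible_finite)
  have "((\<lambda>s. dist (\<sigma> s) (\<sigma> t) / \<bar>s - t\<bar>) \<longlongrightarrow> c) (at t within {0..1})"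
    if t: "t \<in> {0..1}" "t \<notin> N" for t
  proof (rule tendstoI)
    fix e :: real assume "e > 0"
    then obtain n :: nat where n: "1 / Suc n < e"
      using reals_Archimedean by (auto simp: inverse_eq_divide)
    have "t \<in> {0<..<1}" "t \<notin> slow_points \<sigma> c (1 / Suc n)"
      using t unfolding N_def by auto
    then have "\<forall>\<^sub>F s in at t within {0..1}. \<not> dist (\<sigma> s) (\<sigma> t) < (c - 1 / Suc n) * dist s t"
      by (simp add: slow_points_def not_frequently)
    moreover have "\<forall>\<^sub>F s in at t within {0..1}. s \<in> {0..1} \<and> s \<noteq> t"
      by (simp add: eventually_at_filter)
    ultimately show "\<forall>\<^sub>F s in at t within {0..1}. dist (dist (\<sigma> s) (\<sigma> t) / \<bar>s - t\<bar>) c < e"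
    proof eventually_elim
      case (elim s)
      then have "0 < \<bar>s - t\<bar>" "(c - 1 / Suc n) * \<bar>s - t\<bar> \<le> dist (\<sigma> s) (\<sigma> t)"
        by (auto simp: dist_real_def)
      moreover have "dist (\<sigma> s) (\<sigma> t) \<le> c * \<bar>s - t\<bar>"
        using lipschitz_onD[OF lip] elim t by (simp add: dist_real_def)
      ultimately have "c - 1 / Suc n \<le> dist (\<sigma> s) (\<sigma> t) / \<bar>s - t\<bar>" "dist (\<sigma> s) (\<sigma> t) / \<bar>s - t\<bar> \<le> c"
        by (simp_all add: le_divide_eq divide_le_eq)
      then show ?case
        using n by (simp add: dist_real_def)
    qed
  qed
  moreover have "N \<inter> {0..1} \<in> null_sets (lebesgue_on {0..1})"
    using negligible_subset[OF \<open>negligible N\<close>, of "N \<inter> {0..1}"]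
    by (auto simp: null_sets_restrict_space negligible_iff_null_sets)
  ultimately show ?thesis
    by (intro AE_I'[where N = "N \<inter> {0..1}"]) auto
qed

lemma constant_speed_reparametrization:
  fixes g :: "real \<Rightarrow> 'a::metric_space"
  assumes "continuous_on {a..b} g" "finite_length g a b"
  obtains \<sigma> where "\<sigma> ` {0..1} = g ` {a..b}" "\<sigma> 0 = g a" "\<sigma> 1 = g b"
    "(arc_length g a b)-lipschitz_on {0..1} \<sigma>" "constant_speed \<sigma>"
proof
  show "constant_speed (arc_length_reparam g a b)"
    unfolding constant_speed_def
    using metric_derivative_eq_lipschitz_constant[OF lipschitz_arc_length_reparam
        arc_length_le_curve_length_reparam, OF assms assms]
    by blast
qed (use image_arc_length_reparam[OF assms] arc_length_reparam_endpoints[OF assms]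
      lipschitz_arc_length_reparam[OF assms] in auto)

section \<open>Measures supported on a curve\<close>

lemma sets_restrict_borel_closed:
  fixes X :: "'a::metric_space set"
  assumes "closed X"
  shows "A \<in> sets (restrict_space borel X) \<longleftrightarrow> A \<subseteq> X \<and> A \<in> sets borel"
  using assms by (intro sets_restrict_space_iff) auto

lemma compact_null_if_disjoint_msupp:
  fixes \<nu> :: "'a::metric_space measure"
  assumes \<nu>: "\<nu> \<in> prob_measures X" and "closed X" "compact C" "C \<subseteq> X" "C \<inter> msupp \<nu> = {}"
  shows "C \<in> null_sets \<nu>"
proof -
  have space: "space \<nu> = X" and sets: "sets \<nu> = sets (restrict_space borel X)"
    using \<nu> unfolding prob_measures_def by auto
  let ?N = "{U. open U \<and> emeasure \<nu> (U \<inter> X) = 0}"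
  have "C \<subseteq> \<Union>?N"
  proof
    fix x assume "x \<in> C"
    then have "x \<in> X" "x \<notin> msupp \<nu>"
      using assms(4,5) by auto
    then obtain U where "open U" "x \<in> U" "emeasure \<nu> (U \<inter> X) = 0"
      unfolding msupp_def space by (auto simp: zero_less_iff_neq_zero)
    then show "x \<in> \<Union>?N"
      by blast
  qed
  then obtain F where F: "F \<subseteq> ?N" "finite F" "C \<subseteq> \<Union>F"
    using compactE[OF \<open>compact C\<close>, of ?N] by blast
  have "(\<Union>U\<in>F. U \<inter> X) \<in> null_sets \<nu>"
  proof (rule null_sets_UN')
    fix U assume "U \<in> F"
    then have "open U" "emeasure \<nu> (U \<inter> X) = 0"
      using F(1) by auto
    moreover have "U \<inter> X \<in> sets \<nu>"
      unfolding sets sets_restrict_borel_closed[OF \<open>closed X\<close>]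
      using \<open>open U\<close> \<open>closed X\<close> by auto
    ultimately show "U \<inter> X \<in> null_sets \<nu>"
      by auto
  qed (use F(2) in \<open>rule countable_finite\<close>)
  moreover have "C \<in> sets \<nu>"
    unfolding sets sets_restrict_borel_closed[OF \<open>closed X\<close>]
    using assms(3,4) by (auto intro: borel_closed compact_imp_closed)
  moreover have "C \<subseteq> (\<Union>U\<in>F. U \<inter> X)"
    using F(3) assms(4) by auto
  ultimately show ?thesis
    by (rule null_sets_subset)
qed

lemma AE_mem_if_msupp_subset:
  fixes \<nu> :: "'a::metric_space measure"
  assumes \<nu>: "\<nu> \<in> prob_measures X" and "compact X" "closed K" "msupp \<nu> \<subseteq> K"
  shows "AE x in \<nu>. x \<in> K"
proof -
  have space: "space \<nu> = X"
    using \<nu> unfolding prob_measures_def by auto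
  define C where "C n = X - (\<Union>y\<in>K. ball y (1 / Suc n))" for n :: nat
  have "msupp \<nu> \<subseteq> (\<Union>y\<in>K. ball y (1 / Suc n))" for n
    using \<open>msupp \<nu> \<subseteq> K\<close> centre_in_ball[of _ "1 / Suc n"] by fastforce
  then have "C n \<in> null_sets \<nu>" for n
    using \<open>compact X\<close> unfolding C_def
    by (intro compact_null_if_disjoint_msupp[OF \<nu>] compact_imp_closed compact_diff) auto
  moreover have "{x \<in> space \<nu>. x \<notin> K} \<subseteq> (\<Union>n. C n)"
  proof
    fix x assume x: "x \<in> {x \<in> space \<nu>. x \<notin> K}"
    then obtain e where "e > 0" "ball x e \<subseteq> - K"
      using \<open>closed K\<close> open_contains_ball[of "- K"] by auto
    moreover obtain n :: nat where "1 / Suc n < e"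
      using reals_Archimedean[OF \<open>e > 0\<close>] by (auto simp: inverse_eq_divide)
    ultimately have "x \<notin> ball y (1 / Suc n)" if "y \<in> K" for y
    proof -
      have "y \<notin> ball x e"
        using that \<open>ball x e \<subseteq> - K\<close> by blast
      with \<open>1 / Suc n < e\<close> show ?thesis
        by (simp add: dist_commute)
    qed
    then show "x \<in> (\<Union>n. C n)"
      using x space unfolding C_def by auto
  qed
  ultimately show ?thesis
    by (intro AE_I'[where N = "\<Union>n. C n"] null_sets_UN) auto
qed

lemma measurable_restrict_space_if_continuous_on:
  fixes \<sigma> :: "'b::topological_space \<Rightarrow> 'a::metric_space"
  assumes "continuous_on I \<sigma>" "\<sigma> ` I \<subseteq> X" "sets \<omega> = sets (restrict_space borel I)"
  shows "\<sigma> \<in> measurable \<omega> (restrict_space borel X)"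
proof -
  have "space \<omega> = I"
    using sets_eq_imp_space_eq[OF assms(3)] by (simp add: space_restrict_space)
  moreover have "\<sigma> \<in> measurable \<omega> borel"
    using borel_measurable_continuous_on_restrict[OF assms(1)]
      measurable_cong_sets[OF assms(3) refl, where N = "borel :: 'a measure"]
    by simp
  ultimately show ?thesis
    using assms(2) by (intro measurable_restrict_space2) auto
qed

definition first_preimage :: "(real \<Rightarrow> 'a) \<Rightarrow> 'a \<Rightarrow> real" where
  "first_preimage \<sigma> x = (if x \<in> \<sigma> ` {0..1} then Inf {u \<in> {0..1}. \<sigma> u = x} else 0)"

lemma first_preimage_in_Icc: "first_preimage \<sigma> x \<in> {0..1}"
proof (cases "x \<in> \<sigma> ` {0..1}")
  case True
  then obtain u where "u \<in> {0..1}" "\<sigma> u = x"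
    by blast
  then have "Inf {u \<in> {0..1}. \<sigma> u = x} \<le> u" "0 \<le> Inf {u \<in> {0..1}. \<sigma> u = x}"
    by (auto intro!: cInf_lower cInf_greatest bdd_belowI[of _ 0])
  with \<open>u \<in> {0..1}\<close> True show ?thesis
    unfolding first_preimage_def by simp
qed (simp add: first_preimage_def)

context
  fixes \<sigma> :: "real \<Rightarrow> 'a::metric_space" and X :: "'a set"
  assumes cont: "continuous_on {0..1} \<sigma>" and image: "\<sigma> ` {0..1} \<subseteq> X" and "closed X"
begin

lemma distr_in_prob_measures:
  assumes "\<omega> \<in> prob_measures {0..1}"
  shows "distr \<omega> (restrict_space borel X) \<sigma> \<in> prob_measures X"
proof -
  have "prob_space \<omega>" and sets: "sets \<omega> = sets (restrict_space borel {0..1})"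
    using assms unfolding prob_measures_def by auto
  then show ?thesis
    unfolding prob_measures_def
    using prob_space.prob_space_distr measurable_restrict_space_if_continuous_on[OF cont image sets]
    by (simp add: space_restrict_space)
qed

lemma msupp_distr_subset:
  assumes "\<omega> \<in> prob_measures {0..1}"
  shows "msupp (distr \<omega> (restrict_space borel X) \<sigma>) \<subseteq> \<sigma> ` {0..1}"
proof
  let ?\<nu> = "distr \<omega> (restrict_space borel X) \<sigma>"
  fix x assume x: "x \<in> msupp ?\<nu>"
  have space: "space \<omega> = {0..1}" and sets: "sets \<omega> = sets (restrict_space borel {0..1})"
    using assms unfolding prob_measures_def by auto
  have "open (- \<sigma> ` {0..1})"
    using compact_continuous_image[OF cont compact_Icc] by (simp add: compact_imp_closed open_Compl)
  moreover have "emeasure ?\<nu> (- \<sigma> ` {0..1} \<inter> space ?\<nu>) = 0"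
  proof -
    have "- \<sigma> ` {0..1} \<inter> X \<in> sets (restrict_space borel X)"
      unfolding sets_restrict_borel_closed[OF \<open>closed X\<close>]
      using \<open>open (- \<sigma> ` {0..1})\<close> \<open>closed X\<close> by auto
    then have "emeasure ?\<nu> (- \<sigma> ` {0..1} \<inter> X) = emeasure \<omega> (\<sigma> -` (- \<sigma> ` {0..1} \<inter> X) \<inter> space \<omega>)"
      by (rule emeasure_distr[OF measurable_restrict_space_if_continuous_on[OF cont image sets]])
    also have "\<sigma> -` (- \<sigma> ` {0..1} \<inter> X) \<inter> space \<omega> = {}"
      using space by auto
    finally show ?thesis
      by (simp add: space_restrict_space)
  qed
  ultimately show "x \<in> \<sigma> ` {0..1}"
    using x unfolding msupp_def by (auto simp: space_restrict_space)
qed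

lemma first_preimage_least:
  assumes "x \<in> \<sigma> ` {0..1}"
  shows "\<sigma> (first_preimage \<sigma> x) = x" and "\<And>u. u \<in> {0..1} \<Longrightarrow> \<sigma> u = x \<Longrightarrow> first_preimage \<sigma> x \<le> u"
proof -
  let ?P = "{u \<in> {0..1}. \<sigma> u = x}"
  have "closed ?P"
    using continuous_closed_preimage[OF cont, of "{x}"] by (simp add: vimage_def Int_def conj_commute)
  moreover have "?P \<noteq> {}" and bdd: "bdd_below ?P"
    using assms by (auto intro: bdd_belowI[of _ 0])
  ultimately have "Inf ?P \<in> ?P"
    by (intro closed_contains_Inf)
  moreover have "first_preimage \<sigma> x = Inf ?P"
    using assms unfolding first_preimage_def by simp
  ultimately show "\<sigma> (first_preimage \<sigma> x) = x" "\<And>u. u \<in> {0..1} \<Longrightarrow> \<sigma> u = x \<Longrightarrow> first_preimage \<sigma> x \<le> u"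
    using cInf_lower[OF _ bdd] by auto
qed

lemma first_preimage_measurable: "first_preimage \<sigma> \<in> borel_measurable (restrict_space borel X)"
  unfolding borel_measurable_iff_le
proof
  fix c :: real
  let ?K = "\<sigma> ` {0..1}"
  have "compact ?K" "compact (\<sigma> ` ({0..1} \<inter> {..c}))"
    by (auto intro!: compact_continuous_image continuous_on_subset[OF cont] compact_Int_closed)
  then have "\<sigma> ` ({0..1} \<inter> {..c}) \<in> sets borel" "(if 0 \<le> c then - ?K else {}) \<in> sets borel"
    by (auto intro: borel_closed borel_open compact_imp_closed)
  then have "X \<inter> (\<sigma> ` ({0..1} \<inter> {..c}) \<union> (if 0 \<le> c then - ?K else {})) \<in> sets (restrict_space borel X)"
    unfolding sets_restrict_borel_closed[OF \<open>closed X\<close>] using borel_closed[OF \<open>closed X\<close>]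
    by (intro conjI sets.Int sets.Un) auto
  moreover have "first_preimage \<sigma> x \<le> c \<longleftrightarrow> x \<in> \<sigma> ` ({0..1} \<inter> {..c}) \<union> (if 0 \<le> c then - ?K else {})"
    for x
  proof (cases "x \<in> ?K")
    case True
    have "first_preimage \<sigma> x \<le> c \<longleftrightarrow> (\<exists>u\<in>{0..1}. u \<le> c \<and> \<sigma> u = x)"
      using first_preimage_least[OF True] first_preimage_in_Icc[of \<sigma> x] by (meson order_trans)
    moreover have "x \<in> \<sigma> ` ({0..1} \<inter> {..c}) \<longleftrightarrow> (\<exists>u\<in>{0..1}. u \<le> c \<and> \<sigma> u = x)"
      by blast
    moreover have "x \<notin> (if 0 \<le> c then - ?K else {})"
      using True by simp
    ultimately show ?thesis
      by blast
  next
    case False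
    then show ?thesis
      unfolding first_preimage_def by auto
  qed
  then have "{x \<in> space (restrict_space borel X). first_preimage \<sigma> x \<le> c}
      = X \<inter> (\<sigma> ` ({0..1} \<inter> {..c}) \<union> (if 0 \<le> c then - ?K else {}))"
    by (auto simp: space_restrict_space)
  ultimately show "{x \<in> space (restrict_space borel X). first_preimage \<sigma> x \<le> c} \<in> sets (restrict_space borel X)"
    by simp
qed

lemma distr_first_preimage:
  assumes \<nu>: "\<nu> \<in> prob_measures X" and "compact X" and supp: "msupp \<nu> \<subseteq> \<sigma> ` {0..1}"
  shows "distr \<nu> (restrict_space borel {0..1}) (first_preimage \<sigma>) \<in> prob_measures {0..1}"
    and "distr (distr \<nu> (restrict_space borel {0..1}) (first_preimage \<sigma>)) (restrict_space borel X) \<sigma> = \<nu>"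
proof -
  have "prob_space \<nu>" and sets: "sets \<nu> = sets (restrict_space borel X)" and "space \<nu> = X"
    using \<nu> unfolding prob_measures_def by auto
  have "first_preimage \<sigma> \<in> borel_measurable \<nu>"
    using first_preimage_measurable
      measurable_cong_sets[OF sets refl, where N = "borel :: real measure"]
    by simp
  then have fp: "first_preimage \<sigma> \<in> measurable \<nu> (restrict_space borel {0..1})"
    by (rule measurable_restrict_space2[rotated]) (intro Pi_I first_preimage_in_Icc)
  then show "distr \<nu> (restrict_space borel {0..1}) (first_preimage \<sigma>) \<in> prob_measures {0..1}"
    unfolding prob_measures_def using prob_space.prob_space_distr[OF \<open>prob_space \<nu>\<close>]
    by (simp add: space_restrict_space)
  have \<sigma>: "\<sigma> \<in> measurable (restrict_space borel {0..1}) (restrict_space borel X)"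
    by (rule measurable_restrict_space_if_continuous_on[OF cont image]) simp
  have "AE x in \<nu>. x \<in> \<sigma> ` {0..1}"
    using compact_continuous_image[OF cont compact_Icc]
    by (intro AE_mem_if_msupp_subset[OF \<nu> \<open>compact X\<close> _ supp] compact_imp_closed)
  then have "AE x in \<nu>. (\<sigma> \<circ> first_preimage \<sigma>) x = x"
    by eventually_elim (simp add: first_preimage_least(1))
  then have "distr \<nu> (restrict_space borel X) (\<sigma> \<circ> first_preimage \<sigma>) = distr \<nu> (restrict_space borel X) (\<lambda>x. x)"
    using measurable_comp[OF fp \<sigma>] sets by (intro distr_cong_AE) (auto simp: measurable_ident_sets)
  also have "\<dots> = \<nu>"
    using sets by (intro distr_id2) simp
  finally show "distr (distr \<nu> (restrict_space borel {0..1}) (first_preimage \<sigma>)) (restrict_space borel X) \<sigma> = \<nu>"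
    using distr_distr[OF \<sigma> fp] by simp
qed

end

lemma P_curve_imp_distr_constant_speed:
  assumes "\<nu> \<in> P_curve X L" "compact X"
  obtains \<gamma> \<omega> where "\<nu> = distr \<omega> (restrict_space borel X) \<gamma>" "\<gamma> \<in> Lip_loops X" "constant_speed \<gamma>"
    "lip_const \<gamma> \<le> L" "\<omega> \<in> prob_measures {0..1}"
proof -
  obtain g a b where \<nu>: "\<nu> \<in> prob_measures X" and curve: "closed_curve_in X g a b"
    and len: "curve_length g a b \<le> ereal L" and supp: "msupp \<nu> \<subseteq> g ` {a..b}"
    using assms(1) unfolding P_curve_def by blast
  have g: "continuous_on {a..b} g" "g ` {a..b} \<subseteq> X" "g a = g b" and fin: "finite_length g a b"
    using curve len unfolding closed_curve_in_def finite_length_def by (auto simp: le_less_trans)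
  obtain \<sigma> where \<sigma>: "\<sigma> ` {0..1} = g ` {a..b}" "\<sigma> 0 = g a" "\<sigma> 1 = g b"
      "(arc_length g a b)-lipschitz_on {0..1} \<sigma>" "constant_speed \<sigma>"
    using constant_speed_reparametrization[OF g(1) fin] by blast
  have "lip_const \<sigma> \<le> L"
    using lip_const_le[OF \<sigma>(4)] len curve_length_eq_arc_length[OF fin] by simp
  moreover have "\<sigma> \<in> Lip_loops X"
    unfolding Lip_loops_def using \<sigma> g by auto
  moreover obtain \<omega> where "\<omega> \<in> prob_measures {0..1}" "\<nu> = distr \<omega> (restrict_space borel X) \<sigma>"
    using distr_first_preimage[OF lipschitz_on_continuous_on[OF \<sigma>(4)] _ _ \<nu> \<open>compact X\<close>]
      \<sigma>(1) g(2) supp compact_imp_closed[OF \<open>compact X\<close>] by metis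
  ultimately show thesis
    using that \<sigma>(5) by blast
qed

lemma distr_Lip_loop_in_P_curve:
  assumes "\<gamma> \<in> Lip_loops X" "lip_const \<gamma> \<le> L" "\<omega> \<in> prob_measures {0..1}" "closed X"
  shows "distr \<omega> (restrict_space borel X) \<gamma> \<in> P_curve X L"
proof -
  obtain C where C: "C-lipschitz_on {0..1} \<gamma>" and \<gamma>: "\<gamma> ` {0..1} \<subseteq> X" "\<gamma> 0 = \<gamma> 1"
    using assms(1) unfolding Lip_loops_def by blast
  have "continuous_on {0..1} \<gamma>"
    using lipschitz_on_continuous_on[OF C] .
  then show ?thesis
    unfolding P_curve_def closed_curve_in_def
    using distr_in_prob_measures[OF _ \<gamma>(1) assms(4,3)] msupp_distr_subset[OF _ \<gamma>(1) assms(4,3)]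
      curve_length_le_lip_const[OF C] assms(2) \<gamma>
    by (intro CollectI conjI exI[of _ \<gamma>] exI[of _ 0] exI[of _ 1]) (auto intro: order_trans)
qed

theorem lemma1:
  fixes X :: "'a::metric_space set" and L :: real
  assumes "compact X" and "L \<ge> 0"
  shows "P_curve X L =
    {distr \<omega> (restrict_space borel X) \<gamma> | \<gamma> \<omega>.
       \<gamma> \<in> Lip_loops X \<and> constant_speed \<gamma> \<and> lip_const \<gamma> \<le> L \<and> \<omega> \<in> prob_measures {0..1}}"
proof (intro equalityI subsetI)
  fix \<nu> assume "\<nu> \<in> P_curve X L"
  then obtain \<gamma> \<omega> where "\<nu> = distr \<omega> (restrict_space borel X) \<gamma>" "\<gamma> \<in> Lip_loops X"
    "constant_speed \<gamma>" "lip_const \<gamma> \<le> L" "\<omega> \<in> prob_measures {0..1}"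
    using P_curve_imp_distr_constant_speed \<open>compact X\<close> by blast
  then show "\<nu> \<in> {distr \<omega> (restrict_space borel X) \<gamma> | \<gamma> \<omega>.
      \<gamma> \<in> Lip_loops X \<and> constant_speed \<gamma> \<and> lip_const \<gamma> \<le> L \<and> \<omega> \<in> prob_measures {0..1}}"
    by blast
next
  fix \<nu> assume "\<nu> \<in> {distr \<omega> (restrict_space borel X) \<gamma> | \<gamma> \<omega>.
      \<gamma> \<in> Lip_loops X \<and> constant_speed \<gamma> \<and> lip_const \<gamma> \<le> L \<and> \<omega> \<in> prob_measures {0..1}}"
  then obtain \<gamma> \<omega> where "\<nu> = distr \<omega> (restrict_space borel X) \<gamma>" "\<gamma> \<in> Lip_loops X"
    "lip_const \<gamma> \<le> L" "\<omega> \<in> prob_measures {0..1}"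
    by blast
  then show "\<nu> \<in> P_curve X L"
    using distr_Lip_loop_in_P_curve compact_imp_closed[OF \<open>compact X\<close>] by simp
qed

end
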